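(* Let $1<d\le n$ be integers, let $C$ be a real symmetric $n\times n$ matrix with unit diagonal, and let $T_{n,d}=\{Y\in\mathbb{R}^{n\times d}: \|Y_i\|_2=1 \text{ for every row } Y_i\}$. For $Y\in T_{n,d}$ set $\psi=YY^T-C$ and $F_Y=2\psi Y$. Suppose $Y\in T_{n,d}$ satisfies $F_Y-\operatorname{diag}(F_YY^T)\,Y=0$, define the diagonal matrix $\lambda=\tfrac12\operatorname{diag}(F_YY^T)$ and $C(\lambda)=C+\lambda$. If $YY^T$ has the $d$ largest (in absolute value) eigenvalues of $C(\lambda)$, i.e. $YY^T$ equals a matrix obtained from an eigenvalue decomposition $C(\lambda)=QDQ^T$ ($Q$ orthogonal, $D$ diagonal) by keeping only $d$ eigenvalues of largest absolute value and replacing the others by $0$, then $YY^T$ is a global minimizer of the problem \[ \text{minimize } \tfrac12\sum_{i<j}(C_{ij}-X_{ij})^2 \ \text{ over symmetric } X\in\mathbb{R}^{n\times n} \text{ with } \operatorname{rank}(X)\le d,\ X_{ii}=1\ (i=1,\dots,n),\ X\succeq 0. \]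
   Context: For a square matrix $A$, $\operatorname{diag}(A)$ denotes the diagonal matrix with $\operatorname{diag}(A)_{ij}=\delta_{ij}A_{ij}$. $X\succeq 0$ means positive semidefinite. The condition $F_Y-\operatorname{diag}(F_YY^T)Y=0$ says that $Y$ is a stationary point on $T_{n,d}$ of $F(Y)=\tfrac12\|YY^T-C\|_F^2$. *)

theory Defs
  imports "HOL-Analysis.Analysis"
begin

definition diag_part :: "real^'n^'n \<Rightarrow> real^'n^'n" where
  "diag_part A = (\<chi> i j. if i = j then A $ i $ j else 0)"

definition psd :: "real^'n^'n \<Rightarrow> bool" where
  "psd X \<longleftrightarrow> (\<forall>x. 0 \<le> x \<bullet> (X *v x))"

definition in_T :: "real^'d^'n \<Rightarrow> bool" where
  "in_T Y \<longleftrightarrow> (\<forall>i. norm (Y $ i) = 1)"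

definition objective :: "real^('n::{finite,linorder})^('n::{finite,linorder}) \<Rightarrow> real^('n::{finite,linorder})^('n::{finite,linorder}) \<Rightarrow> real" where
  "objective C X = (1/2) * (\<Sum>(i,j)\<in>{(i,j). i < j}. (C $ i $ j - X $ i $ j)^2)"

definition feasible :: "nat \<Rightarrow> real^'n^'n \<Rightarrow> bool" where
  "feasible d X \<longleftrightarrow> transpose X = X \<and> rank X \<le> d \<and> (\<forall>i. X $ i $ i = 1) \<and> psd X"

end

theory Submission
  imports Defs
begin

text \<open>
  Since \<open>C\<close> and every feasible \<open>X\<close> have unit diagonal and \<open>\<lambda>\<close> is diagonal,
  \<open>\<parallel>C(\<lambda>) - X\<parallel>\<^sup>2 = 4 * objective C X + \<parallel>\<lambda>\<parallel>\<^sup>2\<close> (Frobenius norm, which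
  on \<open>real^'n^'n\<close> is the library's \<open>norm\<close>). So on the feasible set the objective is smallest where the
  distance to \<open>C(\<lambda>)\<close> is, and by the Eckart--Young theorem the truncated eigendecomposition
  \<open>YY\<^sup>T\<close> of \<open>C(\<lambda>)\<close> is a closest matrix of rank at most \<open>d\<close>; it is feasible itself.

  Eckart--Young reduces, by conjugating with \<open>Q\<close>, to a diagonal \<open>D\<close>. Projecting the rows of
  \<open>D\<close> onto an orthonormal basis \<open>B\<close> of the row space of \<open>X\<close> leaves a residual of at least
  \<open>\<Sum>k. D\<^sub>k\<^sub>k\<^sup>2 * (1 - w k)\<close> with \<open>w k = (\<Sum>b\<in>B. (b $ k)\<^sup>2)\<close>. By Bessel's inequality
  \<open>0 \<le> w k \<le> 1\<close>, and \<open>\<Sum>k. w k = card B \<le> d\<close>, so the residual is at least the sum of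
  the \<open>D\<^sub>k\<^sub>k\<^sup>2\<close> outside the \<open>d\<close> largest.
\<close>

lemma norm_sq_vec_nth: "(norm (v::real^'n))\<^sup>2 = (\<Sum>i\<in>UNIV. (v $ i)\<^sup>2)"
  unfolding power2_norm_eq_inner inner_vec_def by (simp add: power2_eq_square)

lemma norm_sq_matrix_rows: "(norm (M::real^'n^'m))\<^sup>2 = (\<Sum>i\<in>UNIV. (norm (M $ i))\<^sup>2)"
  unfolding power2_norm_eq_inner inner_vec_def ..

lemma norm_transpose: "norm (transpose (M::real^'n^'m)) = norm M"
proof -
  have "(norm (transpose M))\<^sup>2 = (\<Sum>j\<in>UNIV. \<Sum>i\<in>UNIV. (M $ i $ j)\<^sup>2)"
    by (simp add: norm_sq_matrix_rows norm_sq_vec_nth transpose_def)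
  also have "\<dots> = (norm M)\<^sup>2"
    unfolding norm_sq_matrix_rows norm_sq_vec_nth by (rule sum.swap)
  finally show ?thesis by simp
qed

lemma norm_orthogonal_matrix_vector:
  assumes "orthogonal_matrix (Q::real^'n^'n)"
  shows "norm (Q *v x) = norm x"
proof -
  have "orthogonal_transformation ((*v) Q)"
    using assms by (simp add: orthogonal_transformation_matrix)
  then show ?thesis by (rule orthogonal_transformation_norm)
qed

lemma norm_mult_orthogonal_right:
  assumes "orthogonal_matrix (Q::real^'n^'n)"
  shows "norm (M ** Q) = norm (M::real^'n^'m)"
proof -
  have "norm ((M ** Q) $ i) = norm (M $ i)" for i
  proof -
    have "(M ** Q) $ i = transpose Q *v M $ i"
      by (simp add: vec_eq_iff matrix_matrix_mult_def vector_matrix_mult_def mult.commute)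
    then show ?thesis
      using assms by (simp only: norm_orthogonal_matrix_vector orthogonal_matrix_transpose)
  qed
  then show ?thesis by (simp add: norm_vec_def)
qed

lemma norm_orthogonal_conj:
  assumes "orthogonal_matrix (Q::real^'n^'n)"
  shows "norm (Q ** M ** transpose Q) = norm M"
proof -
  have "norm (Q ** M ** transpose Q) = norm (Q ** M)"
    using assms by (simp only: norm_mult_orthogonal_right orthogonal_matrix_transpose)
  also have "\<dots> = norm (transpose M ** transpose Q)"
    by (metis matrix_transpose_mul norm_transpose)
  also have "\<dots> = norm M"
    using assms by (simp only: norm_mult_orthogonal_right orthogonal_matrix_transpose norm_transpose)
  finally show ?thesis .
qed

lemma matrix_diff_ldistrib: "(A::'a::ring_1^'n^'m) ** (B - C) = A ** B - A ** C"
  by (simp add: matrix_matrix_mult_def vec_eq_iff sum_subtractf right_diff_distrib)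

lemma matrix_diff_rdistrib: "((A::'a::ring_1^'n^'m) - B) ** C = A ** C - B ** C"
  by (simp add: matrix_matrix_mult_def vec_eq_iff sum_subtractf left_diff_distrib)

lemma transpose_eq_self_nth:
  assumes "transpose M = M"
  shows "M $ i $ j = M $ j $ i"
  using arg_cong[OF assms, of "\<lambda>M. M $ j $ i"] by (simp add: transpose_def)

definition diagonal_matrix :: "real^'n^'n \<Rightarrow> bool" where
  "diagonal_matrix D \<longleftrightarrow> (\<forall>i j. i \<noteq> j \<longrightarrow> D $ i $ j = 0)"

definition diag_restrict :: "'n set \<Rightarrow> real^'n^'n \<Rightarrow> real^'n^'n" where
  "diag_restrict S D = (\<chi> i j. if i = j \<and> i \<in> S then D $ i $ j else 0)"

lemma diagonal_matrix_vector_nth: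
  assumes "diagonal_matrix D"
  shows "(D *v x) $ k = D $ k $ k * x $ k"
proof -
  have "(D *v x) $ k = (\<Sum>j\<in>UNIV. if j = k then D $ k $ k * x $ k else 0)"
    unfolding matrix_vector_mult_def vec_lambda_beta
    by (rule sum.cong) (use assms in \<open>auto simp: diagonal_matrix_def\<close>)
  then show ?thesis by simp
qed

lemma norm_sq_diagonal:
  assumes "diagonal_matrix D"
  shows "(norm D)\<^sup>2 = (\<Sum>k\<in>UNIV. (D $ k $ k)\<^sup>2)"
  unfolding norm_sq_matrix_rows
proof (rule sum.cong)
  fix k
  have "(\<Sum>j\<in>UNIV. (D $ k $ j)\<^sup>2) = (\<Sum>j\<in>UNIV. if j = k then (D $ k $ k)\<^sup>2 else 0)"
    by (rule sum.cong) (use assms in \<open>auto simp: diagonal_matrix_def\<close>)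
  then show "(norm (D $ k))\<^sup>2 = (D $ k $ k)\<^sup>2" by (simp add: norm_sq_vec_nth)
qed simp

lemma norm_sq_sub_diag_restrict:
  assumes "diagonal_matrix D"
  shows "(norm (D - diag_restrict S D))\<^sup>2 = (\<Sum>k\<in>- S. (D $ k $ k)\<^sup>2)"
proof -
  have diag_diff: "diagonal_matrix (D - diag_restrict S D)"
    using assms by (simp add: diagonal_matrix_def diag_restrict_def)
  have "(norm (D - diag_restrict S D))\<^sup>2 = (\<Sum>k\<in>UNIV. if k \<in> S then 0 else (D $ k $ k)\<^sup>2)"
    unfolding norm_sq_diagonal[OF diag_diff] by (rule sum.cong) (auto simp: diag_restrict_def)
  then show ?thesis by (simp add: sum.If_cases Compl_eq_Diff_UNIV)
qed

lemma norm_sq_sub_orthonormal_combination: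
  fixes B :: "'a::real_inner set"
  assumes "finite B" and "pairwise orthogonal B" and "\<And>b. b \<in> B \<Longrightarrow> norm b = 1"
  shows "(norm (r - (\<Sum>b\<in>B. c b *\<^sub>R b)))\<^sup>2
           = (norm r)\<^sup>2 - (\<Sum>b\<in>B. (r \<bullet> b)\<^sup>2) + (\<Sum>b\<in>B. (c b - r \<bullet> b)\<^sup>2)"
proof -
  define s where "s = (\<Sum>b\<in>B. c b *\<^sub>R b)"
  have inner_B: "b' \<bullet> b = (if b' = b then 1 else 0)" if "b \<in> B" "b' \<in> B" for b b'
    using assms that by (auto simp: pairwise_def orthogonal_def simp flip: power2_norm_eq_inner)
  have s_b: "s \<bullet> b = c b" if "b \<in> B" for b
  proof -
    have "s \<bullet> b = (\<Sum>b'\<in>B. if b' = b then c b' else 0)"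
      unfolding s_def inner_sum_left by (rule sum.cong) (auto simp: inner_B that)
    then show ?thesis using assms(1) that by simp
  qed
  have "s \<bullet> s = (\<Sum>b\<in>B. (c b)\<^sup>2)"
    by (subst (2) s_def) (simp add: inner_sum_right s_b power2_eq_square)
  moreover have "r \<bullet> s = (\<Sum>b\<in>B. c b * (r \<bullet> b))"
    by (simp add: s_def inner_sum_right)
  moreover have "(norm (r - s))\<^sup>2 = r \<bullet> r - 2 * (r \<bullet> s) + s \<bullet> s"
    by (simp add: power2_norm_eq_inner inner_diff inner_commute)
  ultimately show ?thesis
    by (simp add: s_def power2_norm_eq_inner power2_diff sum.distrib sum_subtractf
        sum_distrib_left algebra_simps)
qed

lemma bessel_inequality:
  fixes B :: "'a::real_inner set"
  assumes "finite B" and "pairwise orthogonal B" and "\<And>b. b \<in> B \<Longrightarrow> norm b = 1"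
  shows "(\<Sum>b\<in>B. (r \<bullet> b)\<^sup>2) \<le> (norm r)\<^sup>2"
proof -
  have "(norm (r - (\<Sum>b\<in>B. (r \<bullet> b) *\<^sub>R b)))\<^sup>2 = (norm r)\<^sup>2 - (\<Sum>b\<in>B. (r \<bullet> b)\<^sup>2)"
    using norm_sq_sub_orthonormal_combination[OF assms, of r "\<lambda>b. r \<bullet> b"] by simp
  then show ?thesis by (metis diff_ge_0_iff_ge zero_le_power2)
qed

lemma norm_sq_sub_span_ge:
  fixes B :: "'a::real_inner set"
  assumes "finite B" and "pairwise orthogonal B" and "\<And>b. b \<in> B \<Longrightarrow> norm b = 1"
    and "x \<in> span B"
  shows "(norm r)\<^sup>2 - (\<Sum>b\<in>B. (r \<bullet> b)\<^sup>2) \<le> (norm (r - x))\<^sup>2"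
proof -
  obtain c where "x = (\<Sum>b\<in>B. c b *\<^sub>R b)"
    using assms(1,4) span_finite by blast
  then show ?thesis
    using norm_sq_sub_orthonormal_combination[OF assms(1-3), of r c] by (simp add: sum_nonneg)
qed

lemma sum_weighted_le_sum_top:
  fixes v w :: "'a::finite \<Rightarrow> real"
  assumes w_bounds: "\<And>k. 0 \<le> w k \<and> w k \<le> 1" and sum_w: "sum w UNIV \<le> real (card S)"
    and v_nonneg: "\<And>k. 0 \<le> v k" and top: "\<forall>i\<in>S. \<forall>j. j \<notin> S \<longrightarrow> v j \<le> v i"
  shows "(\<Sum>k\<in>UNIV. v k * w k) \<le> sum v S"
proof -
  obtain t where "0 \<le> t" and t_le: "\<And>i. i \<in> S \<Longrightarrow> t \<le> v i"
    and le_t: "\<And>j. j \<notin> S \<Longrightarrow> v j \<le> t"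
  proof (cases "S = {}")
    case True
    have max_ge: "v j \<le> Max (range v)" for j by simp
    then have "0 \<le> Max (range v)" using v_nonneg order_trans by blast
    with max_ge show thesis using True by (intro that) auto
  next
    case False
    then have "Min (v ` S) \<in> v ` S" by simp
    then obtain i0 where "i0 \<in> S" and min_eq: "Min (v ` S) = v i0" by auto
    show thesis
    proof (rule that)
      show "0 \<le> Min (v ` S)" using min_eq v_nonneg by simp
      show "Min (v ` S) \<le> v i" if "i \<in> S" for i using that by simp
      show "v j \<le> Min (v ` S)" if "j \<notin> S" for j using top \<open>i0 \<in> S\<close> min_eq that by simp
    qed
  qed
  have split: "(\<Sum>k\<in>UNIV. f k) = sum f S + (\<Sum>k\<in>- S. f k)" for f :: "'a \<Rightarrow> real"
    using sum.subset_diff[of S UNIV f] by (simp add: Compl_eq_Diff_UNIV)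
  have "(\<Sum>k\<in>- S. v k * w k) \<le> (\<Sum>k\<in>- S. t * w k)"
    by (rule sum_mono) (simp add: mult_right_mono le_t w_bounds)
  also have "\<dots> = t * (sum w UNIV - sum w S)"
    by (simp add: split[of w] sum_distrib_left)
  also have "\<dots> \<le> t * (\<Sum>k\<in>S. 1 - w k)"
    using sum_w \<open>0 \<le> t\<close> by (intro mult_left_mono) (simp_all add: sum_subtractf)
  also have "\<dots> \<le> (\<Sum>k\<in>S. v k * (1 - w k))"
    unfolding sum_distrib_left by (rule sum_mono) (simp add: mult_right_mono t_le w_bounds)
  finally show ?thesis
    by (simp add: split[of "\<lambda>k. v k * w k"] right_diff_distrib sum_subtractf)
qed

lemma norm_sq_sub_rows_in_span_ge:
  fixes M X :: "real^'n^'m"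
  assumes "finite B" and "pairwise orthogonal B" and "\<And>b. b \<in> B \<Longrightarrow> norm b = 1"
    and rows_in: "\<And>i. X $ i \<in> span B"
  shows "(norm M)\<^sup>2 - (\<Sum>b\<in>B. (norm (M *v b))\<^sup>2) \<le> (norm (M - X))\<^sup>2"
proof -
  have "(\<Sum>i\<in>UNIV. (norm (M $ i))\<^sup>2 - (\<Sum>b\<in>B. (M $ i \<bullet> b)\<^sup>2))
      \<le> (\<Sum>i\<in>UNIV. (norm (M $ i - X $ i))\<^sup>2)"
    by (rule sum_mono) (rule norm_sq_sub_span_ge[OF assms(1-3) rows_in])
  moreover have "(\<Sum>i\<in>UNIV. \<Sum>b\<in>B. (M $ i \<bullet> b)\<^sup>2) = (\<Sum>b\<in>B. (norm (M *v b))\<^sup>2)"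
    by (subst sum.swap) (simp add: norm_sq_vec_nth matrix_vector_mul_component)
  ultimately show ?thesis by (simp add: norm_sq_matrix_rows sum_subtractf)
qed

lemma sum_norm_sq_diagonal_orthonormal_le:
  fixes D :: "real^'n^'n"
  assumes D: "diagonal_matrix D"
    and B: "finite B" "pairwise orthogonal B" "\<And>b. b \<in> B \<Longrightarrow> norm b = 1"
    and card_B: "card B \<le> card S"
    and top: "\<forall>i\<in>S. \<forall>j. j \<notin> S \<longrightarrow> \<bar>D $ j $ j\<bar> \<le> \<bar>D $ i $ i\<bar>"
  shows "(\<Sum>b\<in>B. (norm (D *v b))\<^sup>2) \<le> (\<Sum>k\<in>S. (D $ k $ k)\<^sup>2)"
proof -
  define w where "w k = (\<Sum>b\<in>B. (b $ k)\<^sup>2)" for k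
  have "(\<Sum>b\<in>B. (norm (D *v b))\<^sup>2) = (\<Sum>b\<in>B. \<Sum>k\<in>UNIV. (D $ k $ k)\<^sup>2 * (b $ k)\<^sup>2)"
    by (simp add: norm_sq_vec_nth diagonal_matrix_vector_nth[OF D] power_mult_distrib)
  also have "\<dots> = (\<Sum>k\<in>UNIV. (D $ k $ k)\<^sup>2 * w k)"
    by (subst sum.swap) (simp add: w_def sum_distrib_left)
  finally have expand: "(\<Sum>b\<in>B. (norm (D *v b))\<^sup>2) = (\<Sum>k\<in>UNIV. (D $ k $ k)\<^sup>2 * w k)" .
  have "w k \<le> 1" for k
    using bessel_inequality[OF B, of "axis k 1"] by (simp add: w_def inner_axis')
  moreover have "0 \<le> w k" for k
    by (simp add: w_def sum_nonneg)
  moreover have "sum w UNIV = real (card B)"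
  proof -
    have "sum w UNIV = (\<Sum>b\<in>B. (norm b)\<^sup>2)"
      unfolding w_def norm_sq_vec_nth by (rule sum.swap)
    then show ?thesis using B(3) by simp
  qed
  ultimately have "(\<Sum>k\<in>UNIV. (D $ k $ k)\<^sup>2 * w k) \<le> (\<Sum>k\<in>S. (D $ k $ k)\<^sup>2)"
    using card_B top by (intro sum_weighted_le_sum_top) (auto simp: abs_le_square_iff)
  then show ?thesis by (simp only: expand)
qed

lemma diagonal_low_rank_approx_error_ge:
  fixes D X :: "real^'n^'n"
  assumes D: "diagonal_matrix D" and rank: "rank X \<le> card S"
    and top: "\<forall>i\<in>S. \<forall>j. j \<notin> S \<longrightarrow> \<bar>D $ j $ j\<bar> \<le> \<bar>D $ i $ i\<bar>"
  shows "(\<Sum>k\<in>- S. (D $ k $ k)\<^sup>2) \<le> (norm (D - X))\<^sup>2"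
proof -
  obtain B where orth: "pairwise orthogonal B" and unit: "\<And>b. b \<in> B \<Longrightarrow> norm b = 1"
    and indep: "independent B" and card_B: "card B = dim (span (rows X))"
    and span_B: "span B = span (rows X)"
    using orthonormal_basis_subspace[OF subspace_span] by metis
  have fin: "finite B" using indep by (rule independent_imp_finite)
  have "X $ i \<in> span B" for i
    unfolding span_B by (rule span_base) (auto simp: rows_def row_def)
  then have "(norm D)\<^sup>2 - (\<Sum>b\<in>B. (norm (D *v b))\<^sup>2) \<le> (norm (D - X))\<^sup>2"
    using norm_sq_sub_rows_in_span_ge[OF fin orth unit] by blast
  moreover have "card B \<le> card S"
    using rank card_B by (simp add: row_rank_def)
  then have "(\<Sum>b\<in>B. (norm (D *v b))\<^sup>2) \<le> (\<Sum>k\<in>S. (D $ k $ k)\<^sup>2)"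
    using sum_norm_sq_diagonal_orthonormal_le[OF D fin orth unit _ top] by blast
  moreover have "(norm D)\<^sup>2 = (\<Sum>k\<in>S. (D $ k $ k)\<^sup>2) + (\<Sum>k\<in>- S. (D $ k $ k)\<^sup>2)"
    using sum.subset_diff[of S UNIV "\<lambda>k. (D $ k $ k)\<^sup>2"]
    by (simp add: norm_sq_diagonal[OF D] Compl_eq_Diff_UNIV)
  ultimately show ?thesis by linarith
qed

theorem eckart_young:
  fixes Q D X :: "real^'n^'n"
  assumes Q: "orthogonal_matrix Q" and D: "diagonal_matrix D" and rank: "rank X \<le> card S"
    and top: "\<forall>i\<in>S. \<forall>j. j \<notin> S \<longrightarrow> \<bar>D $ j $ j\<bar> \<le> \<bar>D $ i $ i\<bar>"
  shows "norm (Q ** D ** transpose Q - Q ** diag_restrict S D ** transpose Q)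
           \<le> norm (Q ** D ** transpose Q - X)"
proof -
  define X' where "X' = transpose Q ** X ** Q"
  have QQ: "Q ** transpose Q = mat 1" "transpose Q ** Q = mat 1"
    using Q by (simp_all add: orthogonal_matrix_def)
  have "X = Q ** X' ** transpose Q"
    by (simp add: X'_def matrix_mul_assoc QQ flip: matrix_mul_assoc[of _ _ "transpose Q"])
  then have "norm (Q ** D ** transpose Q - X) = norm (D - X')"
    by (simp add: norm_orthogonal_conj[OF Q] flip: matrix_diff_ldistrib matrix_diff_rdistrib)
  moreover have "rank X' \<le> card S"
    using rank rank_mul_le_left[of "transpose Q ** X" Q] rank_mul_le_right[of "transpose Q" X]
    by (simp add: X'_def)
  ultimately have "(\<Sum>k\<in>- S. (D $ k $ k)\<^sup>2) \<le> (norm (Q ** D ** transpose Q - X))\<^sup>2"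
    using diagonal_low_rank_approx_error_ge[OF D _ top] by simp
  moreover have "norm (Q ** D ** transpose Q - Q ** diag_restrict S D ** transpose Q)
      = norm (D - diag_restrict S D)"
    by (simp add: norm_orthogonal_conj[OF Q] flip: matrix_diff_ldistrib matrix_diff_rdistrib)
  ultimately show ?thesis
    by (simp add: norm_sq_sub_diag_restrict[OF D] power2_le_imp_le)
qed

lemma sum_symmetric_upper_triangle:
  fixes g :: "'n::{finite,linorder} \<Rightarrow> 'n \<Rightarrow> 'a::comm_semiring_1"
  assumes sym: "\<And>i j. g i j = g j i"
  shows "(\<Sum>i\<in>UNIV. \<Sum>j\<in>UNIV. g i j)
           = 2 * (\<Sum>(i, j)\<in>{(i, j). i < j}. g i j) + (\<Sum>i\<in>UNIV. g i i)"
proof -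
  define Lower Upper Diag where "Lower = {(i::'n, j). i < j}" and "Upper = {(i::'n, j). j < i}"
    and "Diag = {(i::'n, j). i = j}"
  have "Lower \<union> Upper \<union> Diag = UNIV"
    by (auto simp: Lower_def Upper_def Diag_def)
  then have "(\<Sum>i\<in>UNIV. \<Sum>j\<in>UNIV. g i j) = (\<Sum>p\<in>Lower \<union> Upper \<union> Diag. case_prod g p)"
    by (simp add: sum.cartesian_product)
  also have "\<dots> = (\<Sum>p\<in>Lower. case_prod g p) + (\<Sum>p\<in>Upper. case_prod g p)
      + (\<Sum>p\<in>Diag. case_prod g p)"
  proof -
    have "Lower \<inter> Upper = {}" and "(Lower \<union> Upper) \<inter> Diag = {}"
      by (auto simp: Lower_def Upper_def Diag_def)
    then show ?thesis by (simp add: sum.union_disjoint)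
  qed
  also have "(\<Sum>p\<in>Upper. case_prod g p) = (\<Sum>p\<in>Lower. case_prod g p)"
  proof -
    have "Upper = prod.swap ` Lower" by (auto simp: Lower_def Upper_def image_iff)
    then show ?thesis using sym by (simp add: sum.reindex case_prod_beta)
  qed
  also have "(\<Sum>p\<in>Diag. case_prod g p) = (\<Sum>i\<in>UNIV. g i i)"
  proof -
    have "Diag = (\<lambda>i. (i, i)) ` UNIV" by (auto simp: Diag_def)
    then show ?thesis by (simp add: sum.reindex inj_on_def)
  qed
  finally show ?thesis by (simp add: Lower_def mult_2)
qed

lemma norm_sq_diagonal_shift_objective:
  fixes C X L :: "real^('n::{finite,linorder})^('n::{finite,linorder})"
  assumes "transpose C = C" and "\<forall>i. C $ i $ i = 1"
    and "transpose X = X" and "\<forall>i. X $ i $ i = 1"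
    and L: "diagonal_matrix L"
  shows "(norm (C + L - X))\<^sup>2 = 4 * objective C X + (\<Sum>i\<in>UNIV. (L $ i $ i)\<^sup>2)"
proof -
  define g where "g i j = ((C + L - X) $ i $ j)\<^sup>2" for i j
  have L_sym: "L $ i $ j = L $ j $ i" for i j
    using L by (cases "i = j") (auto simp: diagonal_matrix_def)
  have "(norm (C + L - X))\<^sup>2 = (\<Sum>i\<in>UNIV. \<Sum>j\<in>UNIV. g i j)"
    by (simp add: norm_sq_matrix_rows norm_sq_vec_nth g_def)
  also have "\<dots> = 2 * (\<Sum>(i, j)\<in>{(i, j). i < j}. g i j) + (\<Sum>i\<in>UNIV. g i i)"
    by (rule sum_symmetric_upper_triangle)
      (simp add: g_def transpose_eq_self_nth[OF assms(1)] transpose_eq_self_nth[OF assms(3)] L_sym)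
  also have "(\<Sum>(i, j)\<in>{(i, j). i < j}. g i j)
      = (\<Sum>(i, j)\<in>{(i, j). i < j}. (C $ i $ j - X $ i $ j)\<^sup>2)"
    by (rule sum.cong) (use L in \<open>auto simp: g_def diagonal_matrix_def\<close>)
  also have "(\<Sum>i\<in>UNIV. g i i) = (\<Sum>i\<in>UNIV. (L $ i $ i)\<^sup>2)"
    using assms(2,4) by (simp add: g_def)
  finally show ?thesis by (simp add: objective_def)
qed

lemma objective_le_iff_norm_diagonal_shift_le:
  fixes C L X X' :: "real^('n::{finite,linorder})^('n::{finite,linorder})"
  assumes "transpose C = C" and "\<forall>i. C $ i $ i = 1" and "diagonal_matrix L"
    and "transpose X = X" and "\<forall>i. X $ i $ i = 1"
    and "transpose X' = X'" and "\<forall>i. X' $ i $ i = 1"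
  shows "objective C X \<le> objective C X' \<longleftrightarrow> norm (C + L - X) \<le> norm (C + L - X')"
  using norm_sq_diagonal_shift_objective[of C X L] norm_sq_diagonal_shift_objective[of C X' L]
    abs_le_square_iff[of "norm (C + L - X)" "norm (C + L - X')"] assms
  by simp

lemma feasible_gram:
  fixes Y :: "real^'d^'n"
  assumes "in_T Y"
  shows "feasible CARD('d) (Y ** transpose Y)"
  unfolding feasible_def
proof (intro conjI)
  show "transpose (Y ** transpose Y) = Y ** transpose Y"
    by (simp add: matrix_transpose_mul)
  show "rank (Y ** transpose Y) \<le> CARD('d)"
    using rank_mul_le_left[of Y "transpose Y"] rank_bound[of Y] by simp
  show "\<forall>i. (Y ** transpose Y) $ i $ i = 1"
    using assms by (simp add: in_T_def matrix_matrix_mult_def transpose_def norm_eq_1 inner_vec_def)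
  have "x \<bullet> ((Y ** transpose Y) *v x) = (x v* Y) \<bullet> (x v* Y)" for x
    by (simp flip: matrix_vector_mul_assoc dot_lmul_matrix)
  then show "psd (Y ** transpose Y)"
    by (simp add: psd_def)
qed

theorem theorem6p3:
  fixes C :: "real^('n::{finite,linorder})^('n::{finite,linorder})"
    and Y :: "real^('d::finite)^('n::{finite,linorder})"
  assumes d_gt: "1 < CARD('d)" and d_le: "CARD('d) \<le> CARD('n)"
    and C_sym: "transpose C = C" and C_diag: "\<forall>i. C $ i $ i = 1"
    and Y_T: "in_T Y"
    and stat: "let F = 2 *\<^sub>R ((Y ** transpose Y - C) ** Y)
               in F - diag_part (F ** transpose Y) ** Y = 0"
    and top_d: "let F = 2 *\<^sub>R ((Y ** transpose Y - C) ** Y);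
                    Lam = (1/2) *\<^sub>R diag_part (F ** transpose Y);
                    Clam = C + Lam
                in \<exists>Q D S. orthogonal_matrix Q \<and> (\<forall>i j. i \<noteq> j \<longrightarrow> D $ i $ j = 0)
                     \<and> Clam = Q ** D ** transpose Q
                     \<and> card S = CARD('d)
                     \<and> (\<forall>i\<in>S. \<forall>j. j \<notin> S \<longrightarrow> \<bar>D $ j $ j\<bar> \<le> \<bar>D $ i $ i\<bar>)
                     \<and> Y ** transpose Y
                         = Q ** (\<chi> i j. if i = j \<and> i \<in> S then D $ i $ j else 0) ** transpose Q"
  shows "feasible (CARD('d)) (Y ** transpose Y)
         \<and> (\<forall>X. feasible (CARD('d)) X \<longrightarrow> objective C (Y ** transpose Y) \<le> objective C X)"
proof -
  define L where "L = (1/2) *\<^sub>R diag_part ((2 *\<^sub>R ((Y ** transpose Y - C) ** Y)) ** transpose Y)"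
  obtain Q D S where Q: "orthogonal_matrix Q" and D: "diagonal_matrix D"
    and CL: "C + L = Q ** D ** transpose Q" and card_S: "card S = CARD('d)"
    and top: "\<forall>i\<in>S. \<forall>j. j \<notin> S \<longrightarrow> \<bar>D $ j $ j\<bar> \<le> \<bar>D $ i $ i\<bar>"
    and YY: "Y ** transpose Y = Q ** diag_restrict S D ** transpose Q"
    using top_d
    unfolding Let_def L_def[symmetric] diag_restrict_def[symmetric] diagonal_matrix_def[symmetric]
    by (elim exE conjE) (rule that)
  have L_diag: "diagonal_matrix L"
    by (simp add: L_def diag_part_def diagonal_matrix_def)
  have feasible_YY: "feasible CARD('d) (Y ** transpose Y)"
    using Y_T by (rule feasible_gram)
  have "objective C (Y ** transpose Y) \<le> objective C X" if "feasible CARD('d) X" for X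
  proof -
    have X: "transpose X = X" "rank X \<le> card S" "\<forall>i. X $ i $ i = 1"
      using that card_S by (simp_all add: feasible_def)
    have "norm (C + L - Y ** transpose Y) \<le> norm (C + L - X)"
      using eckart_young[OF Q D X(2) top] by (simp add: CL YY)
    with feasible_YY X show ?thesis
      by (simp add: objective_le_iff_norm_diagonal_shift_le[OF C_sym C_diag L_diag] feasible_def)
  qed
  with feasible_YY show ?thesis by blast
qed

end
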